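(* Let $\mathcal{W}$ be a finite set (vocabulary of words), let $n \ge 1$, and let $\phi:\mathcal{W}\to\{0,1\}^n$ be a fixed map (a binary embedding, chosen independently of the input). Let $\varepsilon > 0$. Define the randomized mechanism $\mathrm{BRR}:\mathcal{W}\to\mathcal{W}$ as follows: on input $w\in\mathcal{W}$, compute $\phi_w=\phi(w)$; form $\hat\phi_w\in\{0,1\}^n$ by applying, independently to each coordinate $i$, the randomized response mechanism, i.e. $(\hat\phi_w)_i = (\phi_w)_i$ with probability $\frac{e^{\varepsilon}}{1+e^{\varepsilon}}$ and $(\hat\phi_w)_i = 1-(\phi_w)_i$ otherwise; then output $\hat w \in \operatorname{argmin}_{y\in\mathcal{W}} \|\phi(y)-\hat\phi_w\|$, where ties are broken by a fixed rule that depends only on $\hat\phi_w$ (not on $w$). Let $d(w,w')$ denote the Hamming distance between $\phi(w)$ and $\phi(w')$, i.e. the number of coordinates in which they differ. Then $\mathrm{BRR}$ is $\varepsilon d$-differentially private: for all $w,w'\in\mathcal{W}$ and all $y\in\mathcal{W}$, $$\Pr[\mathrm{BRR}(w)=y]\le e^{\varepsilon d(w,w')}\Pr[\mathrm{BRR}(w')=y].$$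
   Context: Metric differential privacy: given a set $\mathcal{W}$ with a distance $d:\mathcal{W}\times\mathcal{W}\to\mathbb{R}_{+}$, a randomized mechanism $\mathcal{M}:\mathcal{W}\to\mathcal{Y}$ is called $\varepsilon d$-differentially private if for all $w,w'\in\mathcal{W}$ and all outputs $y\in\mathcal{Y}$, $\Pr[\mathcal{M}(w)=y]\le e^{\varepsilon d(w,w')}\Pr[\mathcal{M}(w')=y]$. Here $\|\cdot\|$ is the Euclidean norm on $\mathbb{R}^n \supseteq \{0,1\}^n$. *)

theory Defs
  imports "HOL-Analysis.Analysis" "HOL-Probability.Probability"
begin

text \<open>Binary vectors in {0,1}^n are modelled as functions 'n \<Rightarrow> bool for a finite
  index type 'n (so n = CARD('n) \<ge> 1). They are embedded into R^n coordinatewise.\<close>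

definition bin_to_real :: "('n::finite \<Rightarrow> bool) \<Rightarrow> real ^ 'n" where
  "bin_to_real v = (\<chi> i. if v i then 1 else 0)"

definition rr_bit :: "real \<Rightarrow> bool \<Rightarrow> bool pmf" where
  "rr_bit eps b = map_pmf (\<lambda>keep. if keep then b else \<not> b) (bernoulli_pmf (exp eps / (1 + exp eps)))"

definition rr_vec :: "real \<Rightarrow> ('n::finite \<Rightarrow> bool) \<Rightarrow> ('n \<Rightarrow> bool) pmf" where
  "rr_vec eps v = Pi_pmf UNIV False (\<lambda>i. rr_bit eps (v i))"

text \<open>BRR mechanism: perturb the embedding, then decode with the fixed tie-breaking
  nearest-neighbour rule dec (depending only on the perturbed vector).\<close>
definition BRR :: "('w \<Rightarrow> ('n::finite \<Rightarrow> bool)) \<Rightarrow> (('n \<Rightarrow> bool) \<Rightarrow> 'w) \<Rightarrow> real \<Rightarrow> 'w \<Rightarrow> 'w pmf" where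
  "BRR \<phi> dec eps w = map_pmf dec (rr_vec eps (\<phi> w))"

definition hamming :: "('n::finite \<Rightarrow> bool) \<Rightarrow> ('n \<Rightarrow> bool) \<Rightarrow> nat" where
  "hamming u v = card {i. u i \<noteq> v i}"

end

theory Submission
  imports Defs
begin

text \<open>Randomized response on one bit changes the probability of any output by a factor of at most
  e^eps when the input bit is flipped; on independent coordinates these factors multiply to
  e^(eps d) with d the Hamming distance. Decoding is post-processing of the perturbed vector,
  and a pointwise bound between two distributions is inherited by every event, hence by every
  output of the decoder.\<close>

lemma rr_bit_pmf:
  "pmf (rr_bit e b) c = (if b = c then exp e / (1 + exp e) else 1 / (1 + exp e))"
proof -
  have "0 < 1 + exp e"
    by (simp add: add_pos_pos)
  have "pmf (rr_bit e b) c = measure (bernoulli_pmf (exp e / (1 + exp e)))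
          ((\<lambda>keep. if keep then b else \<not> b) -` {c})"
    unfolding rr_bit_def pmf_map by simp
  also have "(\<lambda>keep. if keep then b else \<not> b) -` {c} = (if b = c then {True} else {False})"
    by auto
  finally show ?thesis
    using \<open>0 < 1 + exp e\<close> by (auto simp: measure_pmf_single divide_simps)
qed

lemma rr_bit_pmf_le:
  assumes "0 \<le> e"
  shows "pmf (rr_bit e b) c \<le> exp (e * of_bool (b \<noteq> b')) * pmf (rr_bit e b') c"
proof -
  have "1 \<le> exp e" "0 < 1 + exp e"
    using assms by (auto simp: add_pos_pos)
  moreover from \<open>1 \<le> exp e\<close> have "1 \<le> exp e * exp e"
    using mult_mono[of 1 "exp e" 1 "exp e"] by simp
  ultimately show ?thesis
    unfolding rr_bit_pmf by (auto simp: divide_simps)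
qed

lemma rr_vec_pmf: "pmf (rr_vec e u) v = (\<Prod>i\<in>UNIV. pmf (rr_bit e (u i)) (v i))"
  unfolding rr_vec_def by (simp add: pmf_Pi)

lemma rr_vec_pmf_le:
  assumes "0 \<le> e"
  shows "pmf (rr_vec e u) v \<le> exp (e * real (hamming u u')) * pmf (rr_vec e u') v"
proof -
  have "pmf (rr_vec e u) v
        \<le> (\<Prod>i\<in>UNIV. exp (e * of_bool (u i \<noteq> u' i)) * pmf (rr_bit e (u' i)) (v i))"
    unfolding rr_vec_pmf by (intro prod_mono) (use rr_bit_pmf_le[OF assms] in auto)
  also have "\<dots> = (\<Prod>i\<in>UNIV. exp (e * of_bool (u i \<noteq> u' i))) * pmf (rr_vec e u') v"
    unfolding rr_vec_pmf by (rule prod.distrib)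
  also have "(\<Prod>i\<in>UNIV. exp (e * of_bool (u i \<noteq> u' i))) = exp (\<Sum>i\<in>UNIV. e * of_bool (u i \<noteq> u' i))"
    by (rule exp_sum[symmetric]) simp
  also have "(\<Sum>i\<in>UNIV. e * of_bool (u i \<noteq> u' i)) = e * real (hamming u u')"
    unfolding hamming_def by (simp add: sum_distrib_left[symmetric] sum.If_cases)
  finally show ?thesis .
qed

lemma measure_pmf_le_if_pmf_le:
  assumes "\<And>x. pmf p x \<le> c * pmf q x"
  shows "measure_pmf.prob p A \<le> c * measure_pmf.prob q A"
proof -
  have "infsetsum (pmf p) A \<le> infsetsum (\<lambda>x. c * pmf q x) A"
    by (intro infsetsum_mono abs_summable_on_cmult_right pmf_abs_summable assms)
  also have "\<dots> = c * infsetsum (pmf q) A"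
    by (intro infsetsum_cmult_right pmf_abs_summable)
  finally show ?thesis
    by (simp add: measure_pmf_conv_infsetsum)
qed

theorem theorem3:
  fixes \<phi> :: "'w::finite \<Rightarrow> ('n::finite \<Rightarrow> bool)"
    and dec :: "('n \<Rightarrow> bool) \<Rightarrow> 'w"
    and \<epsilon> :: real
  assumes eps_pos: "\<epsilon> > 0"
    and dec_argmin: "\<And>v y. norm (bin_to_real (\<phi> (dec v)) - bin_to_real v)
                             \<le> norm (bin_to_real (\<phi> y) - bin_to_real v)"
  shows "\<forall>w w' y. pmf (BRR \<phi> dec \<epsilon> w) y
           \<le> exp (\<epsilon> * real (hamming (\<phi> w) (\<phi> w'))) * pmf (BRR \<phi> dec \<epsilon> w') y"
  unfolding BRR_def pmf_map
  using eps_pos by (intro allI measure_pmf_le_if_pmf_le rr_vec_pmf_le) simp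

end
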